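(* Let $G=(V,E)$ be a $D$-regular bipartite unweighted graph and let $k\in\mathbb N$. Suppose there is $x_0\in V$ with $d_-^{x_0}(y)=d(x_0,y)$ for all $y\in B_k(x_0)$, and suppose (SSP) and (NCP) hold at every vertex $x\in B_{k-2}(x_0)$. Then there is a bijection $\Phi:B_k(x_0)\to\{A\subseteq\{1,\dots,D\}:\#A\le k\}$ such that for all $x,y\in B_k(x_0)$: $x\sim y$ if and only if $\Phi(x)$ and $\Phi(y)$ are adjacent in $H_D$ (i.e. $B_k(x_0)$ with induced edges is isomorphic to the $k$-ball around $\emptyset$ in the $D$-dimensional hypercube).
   Context: $d$ is the combinatorial distance, $S_j(x)=\{y:d(x,y)=j\}$, $B_j(x)=\{y:d(x,y)\le j\}$ (empty for $j<0$), $d_-^{x}(z)=\#\{y\sim z:d(y,x)<d(z,x)\}$. For a $D$-regular graph and a vertex $x$: (SSP) holds at $x$ if $\#S_2(x)\le\binom D2$; (NCP) holds at $x$ if, whenever $d_-^x(z)=2$ for all $z\in S_2(x)$, for every $y_1,y_2\in S_1(x)$ there is at most one $z\in S_2(x)$ with $y_1\sim z\sim y_2$. $H_D$ has vertex set the power set of $\{1,\dots,D\}$, with $A\sim B$ iff their symmetric difference has exactly one element. *)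

theory Defs
  imports Main "HOL-Library.Extended_Nat"
begin

definition simple_graph :: "'a set \<Rightarrow> ('a \<Rightarrow> 'a \<Rightarrow> bool) \<Rightarrow> bool" where
  "simple_graph V E \<longleftrightarrow> (\<forall>x y. E x y \<longrightarrow> x \<in> V \<and> y \<in> V) \<and> (\<forall>x y. E x y \<longrightarrow> E y x) \<and> (\<forall>x. \<not> E x x)"

definition regular :: "'a set \<Rightarrow> ('a \<Rightarrow> 'a \<Rightarrow> bool) \<Rightarrow> nat \<Rightarrow> bool" where
  "regular V E D \<longleftrightarrow> (\<forall>x\<in>V. finite {y. E x y} \<and> card {y. E x y} = D)"

definition bipartite :: "'a set \<Rightarrow> ('a \<Rightarrow> 'a \<Rightarrow> bool) \<Rightarrow> bool" where
  "bipartite V E \<longleftrightarrow> (\<exists>c :: 'a \<Rightarrow> bool. \<forall>x\<in>V. \<forall>y\<in>V. E x y \<longrightarrow> c x \<noteq> c y)"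

inductive walk :: "('a \<Rightarrow> 'a \<Rightarrow> bool) \<Rightarrow> nat \<Rightarrow> 'a \<Rightarrow> 'a \<Rightarrow> bool" for E where
  walk0: "walk E 0 x x"
| walkS: "E x y \<Longrightarrow> walk E n y z \<Longrightarrow> walk E (Suc n) x z"

definition gdist :: "('a \<Rightarrow> 'a \<Rightarrow> bool) \<Rightarrow> 'a \<Rightarrow> 'a \<Rightarrow> enat" where
  "gdist E x y = (if \<exists>n. walk E n x y then enat (LEAST n. walk E n x y) else \<infinity>)"

definition sphere :: "('a \<Rightarrow> 'a \<Rightarrow> bool) \<Rightarrow> nat \<Rightarrow> 'a \<Rightarrow> 'a set" where
  "sphere E j x = {y. gdist E x y = enat j}"

text \<open>Ball with integer radius; empty for negative radius.\<close>
definition ball :: "('a \<Rightarrow> 'a \<Rightarrow> bool) \<Rightarrow> int \<Rightarrow> 'a \<Rightarrow> 'a set" where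
  "ball E j x = {y. \<exists>n. gdist E x y = enat n \<and> int n \<le> j}"

definition dminus :: "('a \<Rightarrow> 'a \<Rightarrow> bool) \<Rightarrow> 'a \<Rightarrow> 'a \<Rightarrow> nat" where
  "dminus E x z = card {y. E y z \<and> gdist E y x < gdist E z x}"

definition SSP :: "('a \<Rightarrow> 'a \<Rightarrow> bool) \<Rightarrow> nat \<Rightarrow> 'a \<Rightarrow> bool" where
  "SSP E D x \<longleftrightarrow> card (sphere E 2 x) \<le> D choose 2"

definition NCP :: "('a \<Rightarrow> 'a \<Rightarrow> bool) \<Rightarrow> 'a \<Rightarrow> bool" where
  "NCP E x \<longleftrightarrow> ((\<forall>z\<in>sphere E 2 x. dminus E x z = 2) \<longrightarrow>
     (\<forall>y1\<in>sphere E 1 x. \<forall>y2\<in>sphere E 1 x. y1 \<noteq> y2 \<longrightarrow>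
        card {z\<in>sphere E 2 x. E y1 z \<and> E z y2} \<le> 1))"

definition hcube_adj :: "nat \<Rightarrow> nat set \<Rightarrow> nat set \<Rightarrow> bool" where
  "hcube_adj D A B \<longleftrightarrow> A \<subseteq> {1..D} \<and> B \<subseteq> {1..D} \<and> card ((A - B) \<union> (B - A)) = 1"

end

theory Submission
  imports Defs
begin

text \<open>Induction on the radius \<open>j\<close>: an isomorphism \<open>\<Phi>\<close> from the \<open>j\<close>-ball onto the subsets of
  \<open>{1..D}\<close> of size at most \<open>j\<close>, mapping levels to cardinalities, is extended to level \<open>j + 1\<close> by
  \<open>\<Psi> z = \<Union> \<Phi>(lower neighbours of z)\<close>. The crux is that every \<open>x\<close> at level \<open>j - 1\<close> has
  exactly two common neighbours with each \<open>z \<in> S\<^sub>2(x)\<close>: by SSP and \<open>D\<close>-regularity there are at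
  least two on average; the cube structure allows at most two when \<open>z\<close> lies below level \<open>j + 1\<close>;
  and for \<open>z\<close> at level \<open>j + 1\<close>, whose \<open>j + 1\<close> lower neighbours each have \<open>j\<close> lower
  neighbours, double counting pairs of lower neighbours leaves no room for more. Hence any two
  lower neighbours of \<open>z\<close> lie over a common \<open>x\<close>, which forces their images to be all
  \<open>j\<close>-subsets of a \<open>(j + 1)\<close>-set. NCP makes \<open>\<Psi>\<close> injective, and counting the edges between
  levels \<open>j\<close> and \<open>j + 1\<close> shows that \<open>\<Psi>\<close> hits every \<open>(j + 1)\<close>-subset.\<close>

section \<open>Finite combinatorics and the hypercube\<close>

definition off_diag :: "'b set \<Rightarrow> ('b \<times> 'b) set" where
  "off_diag A = {(a, b). a \<in> A \<and> b \<in> A \<and> a \<noteq> b}"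

lemma card_off_diag: "finite A \<Longrightarrow> card (off_diag A) = card A * (card A - 1)"
proof -
  assume "finite A"
  moreover have "off_diag A = (SIGMA a:A. A - {a})" unfolding off_diag_def by auto
  ultimately show ?thesis by simp
qed

lemma off_diag_mono: "A \<subseteq> B \<Longrightarrow> off_diag A \<subseteq> off_diag B"
  unfolding off_diag_def by auto

lemma finite_off_diag: "finite A \<Longrightarrow> finite (off_diag A)"
  unfolding off_diag_def by (rule finite_subset[of _ "A \<times> A"]) auto

lemma card_sym_diff:
  "finite A \<Longrightarrow> finite B \<Longrightarrow> card (sym_diff A B) = card (A - B) + card (B - A)"
  by (subst card_Un_disjoint) auto

lemma card_add_card_Diff:
  "finite A \<Longrightarrow> finite B \<Longrightarrow> card A + card (B - A) = card B + card (A - B)"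
  using card_Int_Diff[of A B] card_Int_Diff[of B A] by (simp add: Int_commute)

lemma card_sym_diff_eq_1_iff_subset:
  assumes "finite A" "finite B" "card B = Suc (card A)"
  shows "card (sym_diff A B) = 1 \<longleftrightarrow> A \<subseteq> B"
proof
  assume "card (sym_diff A B) = 1"
  then have "card (A - B) = 0"
    using card_sym_diff[OF assms(1,2)] card_add_card_Diff[OF assms(1,2)] assms(3) by linarith
  then show "A \<subseteq> B" using assms(1) by simp
next
  assume "A \<subseteq> B"
  then have "card (A - B) = 0" by (metis Diff_eq_empty_iff card.empty)
  then show "card (sym_diff A B) = 1"
    using card_sym_diff[OF assms(1,2)] card_add_card_Diff[OF assms(1,2)] assms(3) by linarith
qed

lemma card_sym_diff_eq_1_imp_card_Suc:
  assumes "finite A" "finite B" "card (sym_diff A B) = 1"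
  shows "card B = Suc (card A) \<or> card A = Suc (card B)"
proof -
  have "card (A - B) + card (B - A) = 1"
    using card_sym_diff[OF assms(1,2)] assms(3) by simp
  with card_add_card_Diff[OF assms(1,2)] show ?thesis
    by (cases "card (A - B)") auto
qed

lemma hcube_adj_sym: "hcube_adj D A B \<longleftrightarrow> hcube_adj D B A"
  unfolding hcube_adj_def by (auto simp: Un_commute)

lemma hcube_adj_card_Suc:
  "hcube_adj D A B \<Longrightarrow> card B = Suc (card A) \<or> card A = Suc (card B)"
  unfolding hcube_adj_def
  by (meson card_sym_diff_eq_1_imp_card_Suc finite_atLeastAtMost finite_subset)

lemma hcube_adj_iff_subset:
  "A \<subseteq> {1..D} \<Longrightarrow> B \<subseteq> {1..D} \<Longrightarrow> card B = Suc (card A) \<Longrightarrow> hcube_adj D A B \<longleftrightarrow> A \<subseteq> B"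
  unfolding hcube_adj_def
  by (meson card_sym_diff_eq_1_iff_subset finite_atLeastAtMost finite_subset)

lemma sym_diff_sym_diff: "sym_diff (sym_diff A B) (sym_diff B C) = sym_diff A C"
  by auto

lemma card_hcube_common_nbrs_le_2:
  assumes "hcube_adj D A B" "hcube_adj D B C" "A \<noteq> C"
  shows "card {B'. hcube_adj D A B' \<and> hcube_adj D B' C} \<le> 2"
proof -
  have "card (sym_diff A B) = 1" "card (sym_diff B C) = 1"
    using assms(1,2) unfolding hcube_adj_def by auto
  then obtain e e' where e: "sym_diff A B = {e}" "sym_diff B C = {e'}"
    by (auto simp only: One_nat_def card_1_singleton_iff)
  have AC: "sym_diff A C = sym_diff {e} {e'}"
    using sym_diff_sym_diff[of A B C] e by simp
  have "{B'. hcube_adj D A B' \<and> hcube_adj D B' C} \<subseteq> {sym_diff A {e}, sym_diff A {e'}}"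
  proof
    fix B' assume "B' \<in> {B'. hcube_adj D A B' \<and> hcube_adj D B' C}"
    then obtain d d' where d: "sym_diff A B' = {d}" "sym_diff B' C = {d'}"
      unfolding hcube_adj_def mem_Collect_eq One_nat_def card_1_singleton_iff by blast
    have "sym_diff A C = sym_diff {d} {d'}"
      using sym_diff_sym_diff[of A B' C] d by simp
    moreover have "sym_diff A C \<noteq> {}"
      using assms(3) by auto
    ultimately have "d \<in> sym_diff A C" by auto
    then have "d = e \<or> d = e'" using AC by auto
    moreover have "B' = sym_diff A {d}" using d(1) by auto
    ultimately show "B' \<in> {sym_diff A {e}, sym_diff A {e'}}" by blast
  qed
  then have "card {B'. hcube_adj D A B' \<and> hcube_adj D B' C} \<le> card {sym_diff A {e}, sym_diff A {e'}}"
    by (intro card_mono) auto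
  also have "\<dots> \<le> 2"
    by (cases "sym_diff A {e} = sym_diff A {e'}") auto
  finally show ?thesis .
qed

definition cube_ball :: "nat \<Rightarrow> nat \<Rightarrow> nat set set" where
  "cube_ball D j = {A. A \<subseteq> {1..D} \<and> card A \<le> j}"

definition cube_layer :: "nat \<Rightarrow> nat \<Rightarrow> nat set set" where
  "cube_layer D i = {A. A \<subseteq> {1..D} \<and> card A = i}"

lemma finite_cube_layer: "finite (cube_layer D i)"
  by (rule finite_subset[of _ "Pow {1..D}"]) (auto simp: cube_layer_def)

lemma card_cube_layer: "card (cube_layer D i) = D choose i"
  using n_subsets[of "{1..D}" i] unfolding cube_layer_def by simp

lemma subset_Int_eq_if_card_pred:
  assumes "finite A" "finite B" "card A = j" "card B = j" "A \<noteq> B"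
    and "S \<subseteq> A \<inter> B" "card S = j - 1"
  shows "S = A \<inter> B"
proof -
  have "\<not> A \<subseteq> B" using assms(1-5) card_subset_eq by metis
  then have "A \<inter> B \<subset> A" by auto
  then have "card (A \<inter> B) < j" using assms(1,3) psubset_card_mono by metis
  moreover have "card S \<le> card (A \<inter> B)" using assms(1,6) by (intro card_mono) auto
  ultimately have "card S = card (A \<inter> B)" using assms(7) by linarith
  then show ?thesis using assms(1,6) by (intro card_subset_eq) auto
qed

lemma family_eq_subsets_of_Union:
  assumes fin: "finite F" and card_F: "card F = Suc j" and j: "1 \<le> j"
    and card_mem: "\<And>A. A \<in> F \<Longrightarrow> finite A \<and> card A = j"
    and overlap: "\<And>A B. A \<in> F \<Longrightarrow> B \<in> F \<Longrightarrow> A \<noteq> B \<Longrightarrow>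
      \<exists>S. S \<subseteq> A \<inter> B \<and> card S = j - 1 \<and> card {C\<in>F. S \<subseteq> C} \<le> 2"
  shows "card (\<Union>F) = Suc j \<and> F = {A. A \<subseteq> \<Union>F \<and> card A = j}"
proof -
  have "\<not> card F \<le> Suc 0" using card_F j by simp
  then obtain A B where AB: "A \<in> F" "B \<in> F" "A \<noteq> B"
    using card_le_Suc0_iff_eq[OF fin] by blast
  have fin_AB: "finite A" "card A = j" "finite B" "card B = j" using card_mem AB by auto
  have card_Int: "card (A \<inter> B) = j - 1"
    using overlap[OF AB] subset_Int_eq_if_card_pred[OF fin_AB(1,3,2,4) AB(3)] by metis
  have card_Un: "card (A \<union> B) = Suc j"
    using card_Un_Int[of A B] fin_AB card_Int j by simp
  have sub: "C \<subseteq> A \<union> B" if C: "C \<in> F" for C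
  proof (rule ccontr)
    assume "\<not> C \<subseteq> A \<union> B"
    then obtain c where c: "c \<in> C" "c \<notin> A \<union> B" by auto
    have CAB: "C \<noteq> A" "C \<noteq> B" using c by auto
    have fin_C: "finite C" "card C = j" "card (C - {c}) = j - 1" using card_mem[OF C] c by auto
    obtain S1 where S1: "S1 \<subseteq> A \<inter> C" "card S1 = j - 1" using overlap[OF AB(1) C] CAB by blast
    obtain S2 where S2: "S2 \<subseteq> B \<inter> C" "card S2 = j - 1" "card {D\<in>F. S2 \<subseteq> D} \<le> 2"
      using overlap[OF AB(2) C] CAB by blast
    have "S1 = C - {c}" "S2 = C - {c}"
      using S1 S2 c fin_C by (intro card_subset_eq; auto)+
    then have "S2 = A \<inter> B"
      using S1 S2 fin_AB AB(3) by (intro subset_Int_eq_if_card_pred) auto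
    then have "{A, B, C} \<subseteq> {D\<in>F. S2 \<subseteq> D}" using AB C S2 by auto
    then have "card {A, B, C} \<le> card {D\<in>F. S2 \<subseteq> D}" using fin by (intro card_mono) auto
    then have "card {A, B, C} \<le> 2" using S2(3) by linarith
    then show False using AB CAB by auto
  qed
  then have Union_F: "\<Union>F = A \<union> B" using AB by auto
  have "F \<subseteq> {A'. A' \<subseteq> A \<union> B \<and> card A' = j}" using sub card_mem by auto
  moreover have "card {A'. A' \<subseteq> A \<union> B \<and> card A' = j} = Suc j"
    using n_subsets[of "A \<union> B" j] fin_AB card_Un by simp
  ultimately have "F = {A'. A' \<subseteq> A \<union> B \<and> card A' = j}"
    using card_F fin_AB by (intro card_subset_eq) auto
  then show ?thesis using Union_F card_Un by simp
qed

lemma sum_bounds_imp_eq_2: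
  fixes c :: "'b \<Rightarrow> nat"
  assumes fin: "finite R" and pos: "\<And>q. q \<in> R \<Longrightarrow> 1 \<le> c q"
    and lower: "(\<Sum>q\<in>R. 2) \<le> (\<Sum>q\<in>R. c q)"
    and pairs: "(\<Sum>q\<in>R. c q * (c q - 1)) \<le> (\<Sum>q\<in>R. c q)"
    and p: "p \<in> R"
  shows "c p = 2"
proof -
  \<comment> \<open>this is \<open>(c - 1)(c - 2) \<ge> 0\<close>, with equality exactly for \<open>c \<le> 2\<close>\<close>
  have pointwise: "2 * c q \<le> c q * (c q - 1) + 2" if "q \<in> R" for q
  proof (cases "c q \<le> 2")
    case True
    then have "c q = 1 \<or> c q = 2" using pos[OF that] by linarith
    then show ?thesis by auto
  next
    case False
    then have "c q * 2 \<le> c q * (c q - 1)" by (intro mult_le_mono2) linarith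
    then show ?thesis by linarith
  qed
  have "(\<Sum>q\<in>R. 2 * c q) \<le> (\<Sum>q\<in>R. c q * (c q - 1) + 2)"
    using pointwise by (rule sum_mono)
  also have "\<dots> \<le> (\<Sum>q\<in>R. 2 * c q)"
    unfolding sum.distrib mult_2 using lower pairs by linarith
  finally have eq: "2 * c q = c q * (c q - 1) + 2" if "q \<in> R" for q
    using sum_mono_inv[OF _ pointwise that fin] by simp
  have le_2: "c q \<le> 2" if "q \<in> R" for q
  proof (rule ccontr)
    assume "\<not> c q \<le> 2"
    then have "c q * 2 \<le> c q * (c q - 1)" by (intro mult_le_mono2) linarith
    then show False using eq[OF that] by linarith
  qed
  then have "(\<Sum>q\<in>R. c q) \<le> (\<Sum>q\<in>R. 2)" by (rule sum_mono)
  then have "(\<Sum>q\<in>R. c q) = (\<Sum>q\<in>R. 2)" using lower by linarith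
  from sum_mono_inv[of c R "\<lambda>_. 2", OF this le_2 p fin] show ?thesis .
qed

section \<open>Walks and distance\<close>

lemma walk_snoc: "walk E n x y \<Longrightarrow> E y z \<Longrightarrow> walk E (Suc n) x z"
  by (induction rule: walk.induct) (auto intro: walk.intros)

lemma walk_SucD_snoc: "walk E (Suc n) x z \<Longrightarrow> \<exists>y. walk E n x y \<and> E y z"
proof (induction n arbitrary: x)
  case 0
  then show ?case by (auto elim!: walk.cases intro: walk.intros)
next
  case (Suc n)
  from Suc.prems obtain y where "E x y" "walk E (Suc n) y z" by (auto elim: walk.cases)
  with Suc.IH obtain u where "walk E n y u" "E u z" by blast
  with \<open>E x y\<close> show ?case by (auto intro: walk.intros)
qed

lemma walk_reverse: "(\<And>a b. E a b \<Longrightarrow> E b a) \<Longrightarrow> walk E n x y \<Longrightarrow> walk E n y x"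
proof (induction n arbitrary: y)
  case 0
  then show ?case by (auto elim: walk.cases intro: walk.intros)
next
  case (Suc n)
  from walk_SucD_snoc[OF Suc.prems(2)] obtain u where "walk E n x u" "E u y" by blast
  with Suc show ?case by (auto intro: walk.intros)
qed

lemma walk_0_iff: "walk E 0 x y \<longleftrightarrow> x = y"
  by (auto elim: walk.cases intro: walk.intros)

lemma walk_Suc_0_iff: "walk E (Suc 0) x y \<longleftrightarrow> E x y"
  by (auto elim!: walk.cases intro: walk.intros)

lemma walk_2_iff: "walk E 2 x y \<longleftrightarrow> (\<exists>w. E x w \<and> E w y)"
proof
  assume "walk E 2 x y"
  then obtain w where "E x w" "walk E (Suc 0) w y" by (auto simp: numeral_2_eq_2 elim: walk.cases)
  then show "\<exists>w. E x w \<and> E w y" by (auto simp: walk_Suc_0_iff)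
next
  assume "\<exists>w. E x w \<and> E w y"
  then show "walk E 2 x y" by (auto simp: numeral_2_eq_2 intro!: walk.intros)
qed

lemma gdist_eq_enat_iff: "gdist E x y = enat n \<longleftrightarrow> walk E n x y \<and> (\<forall>m<n. \<not> walk E m x y)"
proof (cases "\<exists>n. walk E n x y")
  case True
  then have dist: "gdist E x y = enat (LEAST n. walk E n x y)" unfolding gdist_def by simp
  show ?thesis
  proof
    assume "gdist E x y = enat n"
    then have "n = (LEAST n. walk E n x y)" using dist by simp
    then show "walk E n x y \<and> (\<forall>m<n. \<not> walk E m x y)"
      using LeastI_ex[OF True] not_less_Least[of _ "\<lambda>n. walk E n x y"] by blast
  next
    assume "walk E n x y \<and> (\<forall>m<n. \<not> walk E m x y)"
    then have "(LEAST n. walk E n x y) = n" by (intro Least_equality) (auto simp: not_less[symmetric])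
    then show "gdist E x y = enat n" using dist by simp
  qed
qed (simp add: gdist_def)

lemma gdist_less_enat_iff: "gdist E x y < enat m \<longleftrightarrow> (\<exists>n<m. walk E n x y)"
proof (cases "\<exists>n. walk E n x y")
  case True
  then have dist: "gdist E x y = enat (LEAST n. walk E n x y)" unfolding gdist_def by simp
  show ?thesis
  proof
    assume "gdist E x y < enat m"
    then show "\<exists>n<m. walk E n x y" using dist LeastI_ex[OF True] by auto
  next
    assume "\<exists>n<m. walk E n x y"
    then obtain n where "n < m" "walk E n x y" by blast
    then show "gdist E x y < enat m" using dist Least_le[of "\<lambda>n. walk E n x y" n] by simp
  qed
qed (simp add: gdist_def)

lemma gdist_commute: "(\<And>a b. E a b \<Longrightarrow> E b a) \<Longrightarrow> gdist E x y = gdist E y x"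
proof -
  assume "\<And>a b. E a b \<Longrightarrow> E b a"
  then have "walk E n x y \<longleftrightarrow> walk E n y x" for n using walk_reverse[of E] by blast
  then show ?thesis unfolding gdist_def by simp
qed

section \<open>Levels of a rooted bipartite regular graph\<close>

locale rooted_bipartite_graph =
  fixes V :: "'a set" and E :: "'a \<Rightarrow> 'a \<Rightarrow> bool" and D :: nat and x0 :: 'a
  assumes simple: "simple_graph V E" and regular: "regular V E D"
    and bipartite: "bipartite V E" and root_in_V: "x0 \<in> V"
begin

lemma E_sym: "E x y \<Longrightarrow> E y x"
  using simple unfolding simple_graph_def by blast

lemma E_commute: "E x y \<longleftrightarrow> E y x"
  using E_sym by blast

lemma E_irrefl: "\<not> E x x"
  using simple unfolding simple_graph_def by blast

lemma E_in_V: "E x y \<Longrightarrow> x \<in> V \<and> y \<in> V"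
  using simple unfolding simple_graph_def by blast

lemma finite_nbrs: "x \<in> V \<Longrightarrow> finite {y. E x y}"
  using regular unfolding regular_def by blast

lemma card_nbrs: "x \<in> V \<Longrightarrow> card {y. E x y} = D"
  using regular unfolding regular_def by blast

lemma gdist_sym: "gdist E x y = gdist E y x"
  by (rule gdist_commute) (rule E_sym)

lemma walk_parity:
  fixes c :: "'a \<Rightarrow> bool"
  assumes c: "\<forall>x\<in>V. \<forall>y\<in>V. E x y \<longrightarrow> c x \<noteq> c y" and "walk E n x y" "x \<in> V"
  shows "y \<in> V \<and> (c y = c x \<longleftrightarrow> even n)"
  using assms(2)
proof (induction n arbitrary: y)
  case 0
  then show ?case using \<open>x \<in> V\<close> by (auto simp: walk_0_iff)
next
  case (Suc n)
  from walk_SucD_snoc[OF Suc.prems] obtain u where u: "walk E n x u" "E u y" by blast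
  then have "u \<in> V \<and> (c u = c x \<longleftrightarrow> even n)" using Suc.IH by blast
  moreover have "y \<in> V" "c u \<noteq> c y" using c u E_in_V by blast+
  ultimately show ?case by auto
qed

lemma no_triangle: "E x w \<Longrightarrow> E w z \<Longrightarrow> \<not> E x z"
  using bipartite E_in_V unfolding bipartite_def by metis

definition reachable :: "'a \<Rightarrow> bool" where
  "reachable y \<longleftrightarrow> (\<exists>n. walk E n x0 y)"

definition level :: "'a \<Rightarrow> nat" where
  "level y = (LEAST n. walk E n x0 y)"

lemma level_le_walk: "walk E n x0 y \<Longrightarrow> level y \<le> n"
  unfolding level_def by (rule Least_le)

lemma walk_level: "reachable y \<Longrightarrow> walk E (level y) x0 y"
  unfolding reachable_def level_def by (rule LeastI_ex)

lemma gdist_root_eq_enat_iff: "gdist E x0 y = enat n \<longleftrightarrow> reachable y \<and> level y = n"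
  unfolding gdist_def reachable_def level_def by simp

lemma reachable_root: "reachable x0" and level_root: "level x0 = 0"
  using level_le_walk[of 0 x0] by (auto simp: reachable_def walk_0_iff intro: walk.intros)

lemma level_eq_0_imp_root: "reachable y \<Longrightarrow> level y = 0 \<Longrightarrow> y = x0"
  using walk_level walk_0_iff by metis

lemma reachable_in_V: "reachable y \<Longrightarrow> y \<in> V"
  using bipartite walk_parity[OF _ walk_level root_in_V] unfolding bipartite_def by blast

lemma level_neq_if_adj: "reachable y \<Longrightarrow> E y z \<Longrightarrow> level y \<noteq> level z"
proof
  assume yz: "reachable y" "E y z" "level y = level z"
  obtain c :: "'a \<Rightarrow> bool" where c: "\<forall>x\<in>V. \<forall>y\<in>V. E x y \<longrightarrow> c x \<noteq> c y"
    using bipartite unfolding bipartite_def by blast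
  have "reachable z" unfolding reachable_def using walk_snoc[OF walk_level[OF yz(1)] yz(2)] by blast
  then have "c z = c x0 \<longleftrightarrow> even (level z)" using walk_parity[OF c walk_level root_in_V] by blast
  moreover have "c y = c x0 \<longleftrightarrow> even (level y)" using walk_parity[OF c walk_level[OF yz(1)] root_in_V] by blast
  moreover have "c y \<noteq> c z" using c yz E_in_V by blast
  ultimately show False using yz(3) by auto
qed

lemma level_adj:
  assumes "reachable y" "E y z"
  shows "reachable z \<and> (level z = Suc (level y) \<or> level y = Suc (level z))"
proof -
  have walk_z: "walk E (Suc (level y)) x0 z" using walk_snoc[OF walk_level] assms .
  then have "reachable z" unfolding reachable_def by blast
  moreover have "level z \<le> Suc (level y)" using level_le_walk[OF walk_z] .
  moreover have "level y \<le> Suc (level z)"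
    using level_le_walk[OF walk_snoc[OF walk_level[OF \<open>reachable z\<close>] E_sym[OF assms(2)]]] .
  moreover have "level y \<noteq> level z" using level_neq_if_adj assms by blast
  ultimately show ?thesis by linarith
qed

lemma lower_nbr_exists:
  assumes "reachable y" "level y = Suc n"
  shows "\<exists>w. E w y \<and> reachable w \<and> level w = n"
proof -
  obtain w where w: "walk E n x0 w" "E w y" using walk_SucD_snoc walk_level assms by metis
  then have "reachable w" unfolding reachable_def by blast
  moreover have "level w \<le> n" using level_le_walk w by blast
  moreover have "level y \<le> Suc (level w)" using level_le_walk[OF walk_snoc[OF walk_level[OF \<open>reachable w\<close>] w(2)]] .
  ultimately show ?thesis using w assms by (intro exI[of _ w]) auto
qed

lemma sphere_2_eq: "sphere E 2 x = {z. z \<noteq> x \<and> \<not> E x z \<and> (\<exists>w. E x w \<and> E w z)}"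
proof -
  have "m < 2 \<longleftrightarrow> m = 0 \<or> m = Suc 0" for m :: nat by auto
  then have "(\<forall>m<2. \<not> walk E m x z) \<longleftrightarrow> \<not> walk E 0 x z \<and> \<not> walk E (Suc 0) x z" for z by metis
  then show ?thesis
    unfolding sphere_def gdist_eq_enat_iff walk_0_iff walk_Suc_0_iff walk_2_iff by auto
qed

lemma sphere_1_eq: "sphere E 1 x = {y. E x y}"
  unfolding sphere_def one_enat_def gdist_eq_enat_iff One_nat_def
  by (auto simp: less_Suc_eq walk_0_iff walk_Suc_0_iff E_irrefl)

definition common_nbrs :: "'a \<Rightarrow> 'a \<Rightarrow> 'a set" where
  "common_nbrs x z = {w. E x w \<and> E w z}"

lemma finite_common_nbrs: "x \<in> V \<Longrightarrow> finite (common_nbrs x z)"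
  unfolding common_nbrs_def by (rule finite_subset[OF _ finite_nbrs]) auto

lemma dminus_sphere_2: "z \<in> sphere E 2 x \<Longrightarrow> dminus E x z = card (common_nbrs x z)"
proof -
  assume z: "z \<in> sphere E 2 x"
  have "gdist E z x = enat 2" using z gdist_sym unfolding sphere_def by auto
  moreover have "gdist E y x < enat 2 \<longleftrightarrow> y = x \<or> E x y" for y
  proof -
    have "m < 2 \<longleftrightarrow> m = 0 \<or> m = Suc 0" for m :: nat by auto
    then have "gdist E y x < enat 2 \<longleftrightarrow> walk E 0 y x \<or> walk E (Suc 0) y x"
      unfolding gdist_less_enat_iff by metis
    then show ?thesis using walk_0_iff walk_Suc_0_iff E_sym by metis
  qed
  moreover have "\<not> E x z" using z sphere_2_eq by auto
  ultimately have "{y. E y z \<and> gdist E y x < gdist E z x} = common_nbrs x z"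
    unfolding common_nbrs_def by auto
  then show ?thesis unfolding dminus_def by simp
qed

lemma finite_sphere_2: "x \<in> V \<Longrightarrow> finite (sphere E 2 x)"
proof -
  assume x: "x \<in> V"
  have "sphere E 2 x \<subseteq> (\<Union>w\<in>{w. E x w}. {z. E w z})" using sphere_2_eq by auto
  moreover have "finite (\<Union>w\<in>{w. E x w}. {z. E w z})" using finite_nbrs x E_in_V by auto
  ultimately show ?thesis by (rule finite_subset)
qed

text \<open>Each of the \<open>D\<close> neighbours of \<open>x\<close> has \<open>D - 1\<close> neighbours in \<open>S\<^sub>2(x)\<close>, as there are no triangles.\<close>
lemma sum_card_common_nbrs_sphere_2:
  assumes x: "x \<in> V"
  shows "(\<Sum>z\<in>sphere E 2 x. card (common_nbrs x z)) = D * (D - 1)"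
proof -
  let ?N = "{w. E x w}" and ?S = "sphere E 2 x"
  have "(\<Sum>z\<in>?S. card (common_nbrs x z)) = (\<Sum>z\<in>?S. \<Sum>w\<in>{w. w \<in> ?N \<and> E w z}. 1)"
    unfolding common_nbrs_def by simp
  also have "\<dots> = (\<Sum>w\<in>?N. \<Sum>z\<in>{z. z \<in> ?S \<and> E w z}. 1)"
    by (rule sum.swap_restrict[OF finite_sphere_2[OF x] finite_nbrs[OF x]])
  also have "\<dots> = (\<Sum>w\<in>?N. D - 1)"
  proof (rule sum.cong[OF refl])
    fix w assume w: "w \<in> ?N"
    then have w_V: "w \<in> V" using E_in_V by blast
    have "{z. z \<in> ?S \<and> E w z} = {z. E w z} - {x}"
      using w no_triangle E_sym unfolding sphere_2_eq by blast
    then show "(\<Sum>z\<in>{z. z \<in> ?S \<and> E w z}. 1) = D - 1"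
      using card_nbrs[OF w_V] finite_nbrs[OF w_V] w E_sym by simp
  qed
  also have "\<dots> = D * (D - 1)" using card_nbrs[OF x] by simp
  finally show ?thesis .
qed

definition level_ball :: "nat \<Rightarrow> 'a set" where
  "level_ball j = {y. reachable y \<and> level y \<le> j}"

definition layer :: "nat \<Rightarrow> 'a set" where
  "layer i = {y. reachable y \<and> level y = i}"

definition lower_nbrs :: "'a \<Rightarrow> 'a set" where
  "lower_nbrs y = {w. E y w \<and> Suc (level w) = level y}"

definition upper_nbrs :: "'a \<Rightarrow> 'a set" where
  "upper_nbrs y = {w. E y w \<and> level w = Suc (level y)}"

lemma dminus_root: "reachable y \<Longrightarrow> dminus E x0 y = card (lower_nbrs y)"
proof -
  assume y: "reachable y"
  have "{w. E w y \<and> gdist E w x0 < gdist E y x0} = lower_nbrs y"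
  proof (rule set_eqI)
    fix w
    show "w \<in> {w. E w y \<and> gdist E w x0 < gdist E y x0} \<longleftrightarrow> w \<in> lower_nbrs y"
    proof (cases "E y w")
      case True
      then have w: "reachable w" "level w = Suc (level y) \<or> level y = Suc (level w)"
        using level_adj y by blast+
      have "gdist E w x0 = enat (level w)" "gdist E y x0 = enat (level y)"
        using w(1) y gdist_root_eq_enat_iff gdist_sym by metis+
      then have "w \<in> {w. E w y \<and> gdist E w x0 < gdist E y x0} \<longleftrightarrow> level w < level y"
        using E_sym[OF True] by simp
      moreover have "w \<in> lower_nbrs y \<longleftrightarrow> Suc (level w) = level y"
        using True unfolding lower_nbrs_def by simp
      ultimately show ?thesis using w(2) by linarith
    next
      case False
      then show ?thesis using E_sym[of w y] unfolding lower_nbrs_def by blast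
    qed
  qed
  then show ?thesis unfolding dminus_def by simp
qed

lemma nbrs_eq_lower_Un_upper:
  "reachable y \<Longrightarrow> {w. E y w} = lower_nbrs y \<union> upper_nbrs y"
  unfolding lower_nbrs_def upper_nbrs_def using level_adj by fastforce

lemma lower_upper_nbrs_disjoint: "lower_nbrs y \<inter> upper_nbrs y = {}"
  unfolding lower_nbrs_def upper_nbrs_def by auto

lemma finite_lower_nbrs: "reachable y \<Longrightarrow> finite (lower_nbrs y)"
  using finite_nbrs[OF reachable_in_V] nbrs_eq_lower_Un_upper by (metis finite_Un)

lemma finite_upper_nbrs: "reachable y \<Longrightarrow> finite (upper_nbrs y)"
  using finite_nbrs[OF reachable_in_V] nbrs_eq_lower_Un_upper by (metis finite_Un)

lemma card_lower_add_upper_nbrs: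
  assumes "reachable y"
  shows "card (lower_nbrs y) + card (upper_nbrs y) = D"
proof -
  have "D = card (lower_nbrs y \<union> upper_nbrs y)"
    using card_nbrs[OF reachable_in_V] nbrs_eq_lower_Un_upper assms by simp
  also have "\<dots> = card (lower_nbrs y) + card (upper_nbrs y)"
    using finite_lower_nbrs finite_upper_nbrs lower_upper_nbrs_disjoint assms
    by (simp add: card_Un_disjoint)
  finally show ?thesis by simp
qed

lemma lower_nbrs_subset_layer: "reachable y \<Longrightarrow> lower_nbrs y \<subseteq> layer (level y - 1)"
  unfolding lower_nbrs_def layer_def using level_adj by fastforce

lemma upper_nbrs_subset_layer: "reachable y \<Longrightarrow> upper_nbrs y \<subseteq> layer (Suc (level y))"
  unfolding upper_nbrs_def layer_def using level_adj by fastforce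

lemma ball_eq_level_ball: "ball E (int j) x0 = level_ball j"
  unfolding ball_def level_ball_def using gdist_root_eq_enat_iff by auto

lemma level_ball_Suc: "level_ball (Suc j) = level_ball j \<union> layer (Suc j)"
  unfolding level_ball_def layer_def by auto

lemma layer_subset_level_ball: "i \<le> j \<Longrightarrow> layer i \<subseteq> level_ball j"
  unfolding level_ball_def layer_def by auto

lemma layer_1: "layer 1 = {y. E x0 y}"
proof (intro set_eqI iffI)
  fix y assume "y \<in> layer 1"
  then have "reachable y" "level y = Suc 0" unfolding layer_def by auto
  then obtain w where "E w y" "reachable w" "level w = 0" using lower_nbr_exists by blast
  then show "y \<in> {y. E x0 y}" using level_eq_0_imp_root by blast
next
  fix y assume "y \<in> {y. E x0 y}"
  then show "y \<in> layer 1" using level_adj[OF reachable_root, of y] level_root unfolding layer_def by auto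
qed

section \<open>Level-preserving isomorphisms onto cube balls\<close>

definition ball_iso :: "nat \<Rightarrow> ('a \<Rightarrow> nat set) \<Rightarrow> bool" where
  "ball_iso j \<Phi> \<longleftrightarrow> bij_betw \<Phi> (level_ball j) (cube_ball D j) \<and>
     (\<forall>x\<in>level_ball j. card (\<Phi> x) = level x) \<and>
     (\<forall>x\<in>level_ball j. \<forall>y\<in>level_ball j. E x y \<longleftrightarrow> hcube_adj D (\<Phi> x) (\<Phi> y))"

lemma ball_iso_inj: "ball_iso j \<Phi> \<Longrightarrow> inj_on \<Phi> (level_ball j)"
  unfolding ball_iso_def bij_betw_def by blast

lemma ball_iso_subset_card:
  "ball_iso j \<Phi> \<Longrightarrow> x \<in> level_ball j \<Longrightarrow> \<Phi> x \<subseteq> {1..D} \<and> card (\<Phi> x) = level x"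
  unfolding ball_iso_def bij_betw_def cube_ball_def by blast

lemma ball_iso_adj_iff_subset:
  assumes iso: "ball_iso j \<Phi>" and "x \<in> level_ball j" "w \<in> level_ball j" "level w = Suc (level x)"
  shows "E x w \<longleftrightarrow> \<Phi> x \<subseteq> \<Phi> w"
proof -
  have "E x w \<longleftrightarrow> hcube_adj D (\<Phi> x) (\<Phi> w)" using assms unfolding ball_iso_def by blast
  also have "\<dots> \<longleftrightarrow> \<Phi> x \<subseteq> \<Phi> w"
    using hcube_adj_iff_subset ball_iso_subset_card[OF iso assms(2)] ball_iso_subset_card[OF iso assms(3)]
      assms(4) by simp
  finally show ?thesis .
qed

lemma ball_iso_layer:
  assumes iso: "ball_iso j \<Phi>" and "i \<le> j"
  shows "bij_betw \<Phi> (layer i) (cube_layer D i)"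
proof -
  have sub: "layer i \<subseteq> level_ball j" using assms(2) by (rule layer_subset_level_ball)
  have "\<Phi> ` layer i = cube_layer D i"
  proof (intro equalityI subsetI)
    fix A assume "A \<in> \<Phi> ` layer i"
    then obtain x where "x \<in> layer i" "A = \<Phi> x" by blast
    then show "A \<in> cube_layer D i"
      using ball_iso_subset_card[OF iso] sub unfolding cube_layer_def layer_def by auto
  next
    fix A assume A: "A \<in> cube_layer D i"
    then have "A \<in> cube_ball D j" using assms(2) unfolding cube_layer_def cube_ball_def by auto
    then obtain x where x: "x \<in> level_ball j" "A = \<Phi> x"
      using iso unfolding ball_iso_def bij_betw_def by blast
    then have "x \<in> layer i"
      using ball_iso_subset_card[OF iso x(1)] A unfolding cube_layer_def layer_def level_ball_def by auto
    then show "A \<in> \<Phi> ` layer i" using x(2) by blast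
  qed
  then show ?thesis
    using inj_on_subset[OF ball_iso_inj[OF iso] sub] unfolding bij_betw_def by blast
qed

lemma ball_iso_0: "ball_iso 0 (\<lambda>_. {})"
proof -
  have "level_ball 0 = {x0}"
    unfolding level_ball_def using level_eq_0_imp_root reachable_root level_root by auto
  moreover have "cube_ball D 0 = {{}}"
    unfolding cube_ball_def by (auto dest: finite_subset)
  ultimately show ?thesis
    unfolding ball_iso_def hcube_adj_def using E_irrefl level_root by (auto simp: bij_betw_def)
qed

lemma no_edge_in_layer: "y \<in> layer i \<Longrightarrow> z \<in> layer i \<Longrightarrow> \<not> E y z"
  using level_neq_if_adj[of y z] unfolding layer_def by auto

lemma ball_iso_adj_next_layer:
  assumes iso: "ball_iso j \<Phi>"
    and bij: "bij_betw \<Psi> (layer (Suc j)) (cube_layer D (Suc j))"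
    and adj: "\<And>w z. w \<in> layer j \<Longrightarrow> z \<in> layer (Suc j) \<Longrightarrow> E w z \<longleftrightarrow> \<Phi> w \<subseteq> \<Psi> z"
    and y: "y \<in> level_ball j" and z: "z \<in> layer (Suc j)"
  shows "E y z \<longleftrightarrow> hcube_adj D (\<Phi> y) (\<Psi> z)"
proof -
  have \<Phi>: "\<Phi> y \<subseteq> {1..D}" "card (\<Phi> y) = level y" using ball_iso_subset_card[OF iso y] by auto
  have \<Psi>: "\<Psi> z \<subseteq> {1..D}" "card (\<Psi> z) = Suc j"
    using bij z unfolding bij_betw_def cube_layer_def by auto
  show ?thesis
  proof (cases "level y = j")
    case True
    then have "y \<in> layer j" using y unfolding level_ball_def layer_def by simp
    then show ?thesis using adj z hcube_adj_iff_subset \<Phi> \<Psi> True by simp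
  next
    case False
    then have "level y < j" using y unfolding level_ball_def by simp
    then show ?thesis
      using level_adj[of y z] hcube_adj_card_Suc[of D "\<Phi> y" "\<Psi> z"] \<Phi> \<Psi> y z
      unfolding level_ball_def layer_def by auto
  qed
qed

text \<open>Both graphs are graded (by level, resp.\ cardinality), so only edges between the layers
  \<open>j\<close> and \<open>j + 1\<close> need checking.\<close>
lemma ball_iso_Suc:
  assumes iso: "ball_iso j \<Phi>"
    and bij: "bij_betw \<Psi> (layer (Suc j)) (cube_layer D (Suc j))"
    and adj: "\<And>w z. w \<in> layer j \<Longrightarrow> z \<in> layer (Suc j) \<Longrightarrow> E w z \<longleftrightarrow> \<Phi> w \<subseteq> \<Psi> z"
  shows "ball_iso (Suc j) (\<lambda>y. if level y \<le> j then \<Phi> y else \<Psi> y)"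
proof -
  define \<Phi>' where "\<Phi>' y = (if level y \<le> j then \<Phi> y else \<Psi> y)" for y
  have \<Phi>'_ball: "\<Phi>' y = \<Phi> y" if "y \<in> level_ball j" for y
    using that unfolding \<Phi>'_def level_ball_def by auto
  have \<Phi>'_layer: "\<Phi>' z = \<Psi> z" if "z \<in> layer (Suc j)" for z
    using that unfolding \<Phi>'_def layer_def by auto
  have cross: "E y z \<longleftrightarrow> hcube_adj D (\<Phi>' y) (\<Phi>' z)" "E z y \<longleftrightarrow> hcube_adj D (\<Phi>' z) (\<Phi>' y)"
    if "y \<in> level_ball j" "z \<in> layer (Suc j)" for y z
    using ball_iso_adj_next_layer[OF iso bij adj that] \<Phi>'_ball \<Phi>'_layer that
      E_commute[of y z] hcube_adj_sym[of D "\<Phi> y" "\<Psi> z"] by simp_all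
  have card_\<Psi>: "card (\<Psi> z) = Suc j" if "z \<in> layer (Suc j)" for z
    using bij that unfolding bij_betw_def cube_layer_def by blast
  have same_layer: "\<not> E z z' \<and> \<not> hcube_adj D (\<Phi>' z) (\<Phi>' z')"
    if "z \<in> layer (Suc j)" "z' \<in> layer (Suc j)" for z z'
    using no_edge_in_layer[OF that] hcube_adj_card_Suc[of D "\<Psi> z" "\<Psi> z'"] \<Phi>'_layer that
      card_\<Psi>[OF that(1)] card_\<Psi>[OF that(2)] by auto
  have "bij_betw \<Phi>' (level_ball j \<union> layer (Suc j)) (cube_ball D j \<union> cube_layer D (Suc j))"
  proof (rule bij_betw_combine)
    show "bij_betw \<Phi>' (level_ball j) (cube_ball D j)"
      using iso bij_betw_cong[of "level_ball j" \<Phi>' \<Phi>] \<Phi>'_ball unfolding ball_iso_def by metis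
    show "bij_betw \<Phi>' (layer (Suc j)) (cube_layer D (Suc j))"
      using bij bij_betw_cong[of "layer (Suc j)" \<Phi>' \<Psi>] \<Phi>'_layer by metis
  qed (auto simp: cube_ball_def cube_layer_def)
  moreover have "cube_ball D j \<union> cube_layer D (Suc j) = cube_ball D (Suc j)"
    unfolding cube_ball_def cube_layer_def by auto
  moreover have "E x y \<longleftrightarrow> hcube_adj D (\<Phi>' x) (\<Phi>' y)"
    if "x \<in> level_ball j \<union> layer (Suc j)" "y \<in> level_ball j \<union> layer (Suc j)" for x y
    using that iso \<Phi>'_ball cross same_layer unfolding ball_iso_def by (metis UnE)
  moreover have "card (\<Phi>' x) = level x" if "x \<in> level_ball j \<union> layer (Suc j)" for x
    using that ball_iso_subset_card[OF iso] card_\<Psi> \<Phi>'_ball \<Phi>'_layer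
    unfolding layer_def by auto
  ultimately show ?thesis
    unfolding ball_iso_def \<Phi>'_def[symmetric] level_ball_Suc by auto
qed

lemma ball_iso_1: "\<exists>\<Phi>. ball_iso 1 \<Phi>"
proof -
  obtain f where f: "bij_betw f {y. E x0 y} {1..D}"
    using finite_same_card_bij[OF finite_nbrs[OF root_in_V], of "{1..D}"] card_nbrs[OF root_in_V]
    by auto
  have "bij_betw (\<lambda>i. {i}) {1..D} (cube_layer D (Suc 0))"
    unfolding bij_betw_def cube_layer_def by (auto simp: card_1_singleton_iff)
  then have "bij_betw (\<lambda>y. {f y}) (layer (Suc 0)) (cube_layer D (Suc 0))"
    using bij_betw_trans[OF f] layer_1 by (simp add: comp_def)
  moreover have "E w z \<longleftrightarrow> {} \<subseteq> {f z}" if "w \<in> layer 0" "z \<in> layer (Suc 0)" for w z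
    using that layer_1 level_eq_0_imp_root unfolding layer_def by auto
  ultimately have "ball_iso (Suc 0) (\<lambda>y. if level y \<le> 0 then {} else {f y})"
    by (intro ball_iso_Suc[OF ball_iso_0]) auto
  then show ?thesis by (metis One_nat_def)
qed

end

section \<open>The induction step\<close>

locale rooted_graph_SSP_NCP = rooted_bipartite_graph +
  fixes k :: nat
  assumes dminus_eq_gdist: "\<forall>y\<in>ball E (int k) x0. enat (dminus E x0 y) = gdist E x0 y"
    and SSP_NCP: "\<forall>x\<in>ball E (int k - 2) x0. SSP E D x \<and> NCP E x"
begin

lemma card_lower_nbrs:
  assumes "reachable y" "level y \<le> k"
  shows "card (lower_nbrs y) = level y"
proof -
  have "enat (dminus E x0 y) = gdist E x0 y"
    using dminus_eq_gdist assms unfolding ball_eq_level_ball level_ball_def by blast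
  moreover have "gdist E x0 y = enat (level y)" using gdist_root_eq_enat_iff assms(1) by simp
  ultimately show ?thesis using dminus_root[OF assms(1)] by simp
qed

lemma card_upper_nbrs: "reachable y \<Longrightarrow> level y \<le> k \<Longrightarrow> card (upper_nbrs y) = D - level y"
  using card_lower_nbrs card_lower_add_upper_nbrs by (metis add_diff_cancel_left')

lemma SSP_NCP_at: "reachable x \<Longrightarrow> level x + 2 \<le> k \<Longrightarrow> SSP E D x \<and> NCP E x"
  using SSP_NCP gdist_root_eq_enat_iff unfolding ball_def by force

end

locale ball_iso_step = rooted_graph_SSP_NCP +
  fixes j :: nat and \<Phi> :: "'a \<Rightarrow> nat set"
  assumes j_pos: "1 \<le> j" and j_less: "Suc j \<le> k" and iso: "ball_iso j \<Phi>"
begin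

abbreviation "X \<equiv> layer (j - 1)"
abbreviation "W \<equiv> layer j"
abbreviation "Z \<equiv> layer (Suc j)"

lemma X_ball: "X \<subseteq> level_ball j" and W_ball: "W \<subseteq> level_ball j"
  by (simp_all add: layer_subset_level_ball)

lemma finite_layer: "i \<le> j \<Longrightarrow> finite (layer i)"
  using bij_betw_finite[OF ball_iso_layer[OF iso]] finite_cube_layer by blast

lemma card_W: "card W = D choose j"
  using bij_betw_same_card[OF ball_iso_layer[OF iso order.refl]] card_cube_layer by simp

lemma layer_vertex_of_subset:
  assumes "i \<le> j" "A \<subseteq> {1..D}" "card A = i"
  obtains x where "x \<in> layer i" "\<Phi> x = A"
proof -
  have "A \<in> \<Phi> ` layer i"
    using bij_betw_imp_surj_on[OF ball_iso_layer[OF iso assms(1)]] assms(2,3)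
    unfolding cube_layer_def by simp
  then show ?thesis using that by blast
qed

lemma lower_nbrs_Z:
  assumes "z \<in> Z"
  shows "lower_nbrs z \<subseteq> W" "card (lower_nbrs z) = Suc j"
proof -
  have z: "reachable z" "level z = Suc j" using assms unfolding layer_def by auto
  show "lower_nbrs z \<subseteq> W" using lower_nbrs_subset_layer[OF z(1)] z(2) by simp
  show "card (lower_nbrs z) = Suc j" using card_lower_nbrs[OF z(1)] z(2) j_less by simp
qed

lemma upper_nbrs_W:
  assumes "w \<in> W"
  shows "upper_nbrs w \<subseteq> Z" "card (upper_nbrs w) = D - j"
proof -
  have w: "reachable w" "level w = j" using assms unfolding layer_def by auto
  show "upper_nbrs w \<subseteq> Z" using upper_nbrs_subset_layer[OF w(1)] w(2) by simp
  show "card (upper_nbrs w) = D - j" using card_upper_nbrs[OF w(1)] w(2) j_less by simp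
qed

lemma finite_Z: "finite Z"
proof -
  have "Z \<subseteq> (\<Union>w\<in>W. upper_nbrs w)"
  proof
    fix z assume z: "z \<in> Z"
    then obtain w where "E w z" "reachable w" "level w = j"
      using lower_nbr_exists unfolding layer_def by blast
    then show "z \<in> (\<Union>w\<in>W. upper_nbrs w)" using z unfolding upper_nbrs_def layer_def by auto
  qed
  moreover have "finite (\<Union>w\<in>W. upper_nbrs w)"
    using finite_layer[of j] finite_upper_nbrs unfolding layer_def by auto
  ultimately show ?thesis by (rule finite_subset)
qed

text \<open>Edges between \<open>W\<close> and \<open>Z\<close> counted from both sides.\<close>
lemma card_Z: "card Z = D choose Suc j"
proof -
  have "(w, z) \<in> (SIGMA w:W. upper_nbrs w) \<longleftrightarrow> (z, w) \<in> (SIGMA z:Z. lower_nbrs z)" for w z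
    using level_adj[of w z] level_adj[of z w] E_commute[of w z]
    unfolding upper_nbrs_def lower_nbrs_def layer_def by auto
  then have "prod.swap ` (SIGMA w:W. upper_nbrs w) = (SIGMA z:Z. lower_nbrs z)"
    by force
  moreover have "card (prod.swap ` (SIGMA w:W. upper_nbrs w)) = card (SIGMA w:W. upper_nbrs w)"
    by (rule card_image) (simp add: inj_on_def)
  ultimately have "card (SIGMA z:Z. lower_nbrs z) = card (SIGMA w:W. upper_nbrs w)"
    by simp
  moreover have "card (SIGMA z:Z. lower_nbrs z) = card Z * Suc j"
  proof -
    have "\<forall>z\<in>Z. finite (lower_nbrs z)" using finite_lower_nbrs unfolding layer_def by blast
    then show ?thesis using finite_Z lower_nbrs_Z(2) by (simp add: card_SigmaI)
  qed
  moreover have "card (SIGMA w:W. upper_nbrs w) = (D choose j) * (D - j)"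
  proof -
    have "\<forall>w\<in>W. finite (upper_nbrs w)" using finite_upper_nbrs unfolding layer_def by blast
    then show ?thesis using finite_layer[of j] upper_nbrs_W(2) card_W by (simp add: card_SigmaI)
  qed
  ultimately have "card Z * Suc j = (D choose Suc j) * Suc j"
    using binomial_absorb_comp[of D j] binomial_absorption[of j D] by (simp add: mult.commute)
  then show ?thesis by (subst (asm) mult_cancel2) simp
qed

lemma finite_X: "finite X"
  using finite_layer by simp

lemma level_of_path:
  assumes x: "x \<in> X" and z: "z \<in> Z" and "E x w" "E w z"
  shows "w \<in> W"
proof -
  have lx: "reachable x" "level x = j - 1" and lz: "level z = Suc j"
    using x z unfolding layer_def by auto
  then have "reachable w" "level w = Suc (level x) \<or> level x = Suc (level w)"
    using level_adj[OF lx(1) \<open>E x w\<close>] by auto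
  moreover have "level z = Suc (level w) \<or> level w = Suc (level z)"
    using level_adj[OF \<open>reachable w\<close> \<open>E w z\<close>] by auto
  ultimately show ?thesis using lx lz j_pos unfolding layer_def by auto
qed

lemma sphere_2_of_path:
  assumes x: "x \<in> X" and z: "z \<in> Z" and "E x w" "E w z"
  shows "z \<in> sphere E 2 x"
proof -
  have lx: "reachable x" "level x = j - 1" and lz: "level z = Suc j"
    using x z unfolding layer_def by auto
  then have "x \<noteq> z" using j_pos by auto
  moreover have "\<not> E x z" using level_adj[OF lx(1), of z] lx lz j_pos by auto
  ultimately show ?thesis unfolding sphere_2_eq using assms by auto
qed

lemma sphere_2_level_le:
  assumes x: "x \<in> X" and z: "z \<in> sphere E 2 x"
  shows "reachable z \<and> level z \<le> Suc j"
proof -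
  obtain w where w: "E x w" "E w z" using z sphere_2_eq by blast
  have lx: "reachable x" "level x = j - 1" using x unfolding layer_def by auto
  then have "reachable w \<and> level w \<le> j" using level_adj[OF lx(1) w(1)] j_pos by auto
  then show ?thesis using level_adj[of w z] w by auto
qed

lemma card_common_nbrs_le_2:
  assumes x: "x \<in> X" and z: "z \<in> sphere E 2 x" and lz: "level z \<le> j"
  shows "card (common_nbrs x z) \<le> 2"
proof -
  have lx: "reachable x" "level x = j - 1" using x unfolding layer_def by auto
  have x_ball: "x \<in> level_ball j" using x X_ball by blast
  have z_ball: "z \<in> level_ball j" using sphere_2_level_le[OF x z] lz unfolding level_ball_def by auto
  have C_ball: "common_nbrs x z \<subseteq> level_ball j"
    using level_adj[OF lx(1)] lx j_pos unfolding common_nbrs_def level_ball_def by fastforce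
  have adj: "E a b \<longleftrightarrow> hcube_adj D (\<Phi> a) (\<Phi> b)" if "a \<in> level_ball j" "b \<in> level_ball j" for a b
    using iso that unfolding ball_iso_def by blast
  obtain w0 where w0: "E x w0" "E w0 z" using z sphere_2_eq by blast
  have "x \<noteq> z" using z sphere_2_eq by blast
  then have "\<Phi> x \<noteq> \<Phi> z" using ball_iso_inj[OF iso] x_ball z_ball unfolding inj_on_def by blast
  moreover have "w0 \<in> level_ball j" using C_ball w0 unfolding common_nbrs_def by blast
  ultimately have le_2: "card {B. hcube_adj D (\<Phi> x) B \<and> hcube_adj D B (\<Phi> z)} \<le> 2"
    using card_hcube_common_nbrs_le_2 adj x_ball z_ball w0 by blast
  have "\<Phi> ` common_nbrs x z \<subseteq> {B. hcube_adj D (\<Phi> x) B \<and> hcube_adj D B (\<Phi> z)}"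
    using adj C_ball x_ball z_ball unfolding common_nbrs_def by blast
  moreover have "finite {B. hcube_adj D (\<Phi> x) B \<and> hcube_adj D B (\<Phi> z)}"
    by (rule finite_subset[of _ "Pow {1..D}"]) (auto simp: hcube_adj_def)
  ultimately have "card (\<Phi> ` common_nbrs x z) \<le> 2" using le_2 by (meson card_mono order_trans)
  then show ?thesis
    using card_image[OF inj_on_subset[OF ball_iso_inj[OF iso] C_ball]] by simp
qed

definition lower_at_2 :: "'a \<Rightarrow> 'a set" where
  "lower_at_2 z = {x\<in>X. z \<in> sphere E 2 x}"

lemma finite_lower_at_2: "finite (lower_at_2 z)"
  unfolding lower_at_2_def using finite_X by simp

lemma common_nbrs_subset_lower_nbrs:
  assumes "z \<in> Z" "x \<in> X"
  shows "common_nbrs x z \<subseteq> lower_nbrs z"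
proof
  fix w assume "w \<in> common_nbrs x z"
  then have "E x w" "E w z" unfolding common_nbrs_def by auto
  then show "w \<in> lower_nbrs z"
    using level_of_path[OF assms(2,1)] E_sym assms(1) unfolding lower_nbrs_def layer_def by auto
qed

lemma Sigma_common_nbrs_eq:
  assumes z: "z \<in> Z"
  shows "(SIGMA x:lower_at_2 z. common_nbrs x z) = prod.swap ` (SIGMA w:lower_nbrs z. lower_nbrs w)"
proof -
  have lz: "reachable z" "level z = Suc j" using z unfolding layer_def by auto
  have "(x, w) \<in> (SIGMA x:lower_at_2 z. common_nbrs x z) \<longleftrightarrow> w \<in> lower_nbrs z \<and> x \<in> lower_nbrs w"
    for x w
  proof
    assume "(x, w) \<in> (SIGMA x:lower_at_2 z. common_nbrs x z)"
    then have x: "x \<in> X" and xw: "E x w" "E w z"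
      unfolding lower_at_2_def common_nbrs_def by auto
    then have "w \<in> W" using level_of_path z by blast
    then show "w \<in> lower_nbrs z \<and> x \<in> lower_nbrs w"
      using x xw E_commute lz j_pos unfolding lower_nbrs_def layer_def by auto
  next
    assume "w \<in> lower_nbrs z \<and> x \<in> lower_nbrs w"
    then have e: "E z w" "E w x" "Suc (level w) = Suc j" "Suc (level x) = level w"
      using lz unfolding lower_nbrs_def by auto
    then have "reachable w" "reachable x" using level_adj lz(1) by blast+
    then have x: "x \<in> X" using e unfolding layer_def by auto
    then show "(x, w) \<in> (SIGMA x:lower_at_2 z. common_nbrs x z)"
      using sphere_2_of_path[OF x z] e E_commute unfolding lower_at_2_def common_nbrs_def by auto
  qed
  then show ?thesis by force
qed

text \<open>Each of the \<open>j + 1\<close> lower neighbours of \<open>z\<close> has \<open>j\<close> lower neighbours.\<close>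
lemma sum_card_common_nbrs_lower_at_2:
  assumes z: "z \<in> Z"
  shows "(\<Sum>x\<in>lower_at_2 z. card (common_nbrs x z)) = Suc j * j"
proof -
  have fin: "\<forall>x\<in>lower_at_2 z. finite (common_nbrs x z)"
    using finite_common_nbrs reachable_in_V unfolding lower_at_2_def layer_def by auto
  have "(\<Sum>x\<in>lower_at_2 z. card (common_nbrs x z)) = card (SIGMA x:lower_at_2 z. common_nbrs x z)"
    using finite_lower_at_2 fin by (simp add: card_SigmaI)
  also have "\<dots> = card (SIGMA w:lower_nbrs z. lower_nbrs w)"
    unfolding Sigma_common_nbrs_eq[OF z] by (rule card_image) (simp add: inj_on_def)
  also have "\<dots> = (\<Sum>w\<in>lower_nbrs z. card (lower_nbrs w))"
    using finite_lower_nbrs lower_nbrs_Z[OF z] z unfolding layer_def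
    by (intro card_SigmaI) (auto dest: subsetD)
  also have "\<dots> = (\<Sum>w\<in>lower_nbrs z. j)"
    using lower_nbrs_Z(1)[OF z] card_lower_nbrs j_less unfolding layer_def
    by (intro sum.cong) (auto dest!: subsetD)
  also have "\<dots> = Suc j * j" using lower_nbrs_Z(2)[OF z] by simp
  finally show ?thesis .
qed

text \<open>A common lower neighbour is the preimage of the intersection of the images.\<close>
lemma lower_common_nbr_unique:
  assumes "a \<in> W" "b \<in> W" "a \<noteq> b" "x \<in> X" "x' \<in> X"
    and "E x a" "E x b" "E x' a" "E x' b"
  shows "x = x'"
proof -
  have ab: "a \<in> level_ball j" "b \<in> level_ball j" and xx: "x \<in> level_ball j" "x' \<in> level_ball j"
    using assms(1,2,4,5) X_ball W_ball by auto
  have lev: "level a = j" "level b = j" "level x = j - 1" "level x' = j - 1"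
    using assms(1,2,4,5) unfolding layer_def by auto
  have fin: "finite (\<Phi> a)" "finite (\<Phi> b)"
    using ball_iso_subset_card[OF iso] ab finite_subset by blast+
  have card_ab: "card (\<Phi> a) = j" "card (\<Phi> b) = j"
    using ball_iso_subset_card[OF iso] ab lev by auto
  have "\<Phi> a \<noteq> \<Phi> b" using ball_iso_inj[OF iso] ab assms(3) unfolding inj_on_def by blast
  then have "\<Phi> y = \<Phi> a \<inter> \<Phi> b" if "y \<in> level_ball j" "level y = j - 1" "E y a" "E y b" for y
    using subset_Int_eq_if_card_pred[OF fin card_ab] ball_iso_adj_iff_subset[OF iso that(1)]
      ball_iso_subset_card[OF iso that(1)] ab lev that j_pos by auto
  then have "\<Phi> x = \<Phi> x'" using xx lev assms(6-9) by metis
  then show ?thesis using ball_iso_inj[OF iso] xx unfolding inj_on_def by blast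
qed

lemma finite_common_nbrs_X: "x \<in> X \<Longrightarrow> finite (common_nbrs x z)"
  using finite_common_nbrs reachable_in_V unfolding layer_def by blast

lemma card_off_diag_common_nbrs_eq_card_Union:
  assumes z: "z \<in> Z"
  shows "(\<Sum>x\<in>lower_at_2 z. card (off_diag (common_nbrs x z))) =
    card (\<Union>x\<in>lower_at_2 z. off_diag (common_nbrs x z))"
proof (rule card_UN_disjoint[symmetric])
  show "finite (lower_at_2 z)" by (rule finite_lower_at_2)
  show "\<forall>x\<in>lower_at_2 z. finite (off_diag (common_nbrs x z))"
    using finite_off_diag finite_common_nbrs_X unfolding lower_at_2_def by auto
  show "\<forall>x\<in>lower_at_2 z. \<forall>x'\<in>lower_at_2 z. x \<noteq> x' \<longrightarrow>
      off_diag (common_nbrs x z) \<inter> off_diag (common_nbrs x' z) = {}"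
  proof (intro ballI impI)
    fix x x' assume x: "x \<in> lower_at_2 z" and x': "x' \<in> lower_at_2 z" and "x \<noteq> x'"
    have "a \<in> W" if "a \<in> common_nbrs x z" for a
      using common_nbrs_subset_lower_nbrs[OF z] lower_nbrs_Z(1)[OF z] x that
      unfolding lower_at_2_def by blast
    then show "off_diag (common_nbrs x z) \<inter> off_diag (common_nbrs x' z) = {}"
      using lower_common_nbr_unique[of _ _ x x'] x x' \<open>x \<noteq> x'\<close>
      unfolding off_diag_def common_nbrs_def lower_at_2_def by blast
  qed
qed

lemma Union_off_diag_common_nbrs_subset:
  "z \<in> Z \<Longrightarrow> (\<Union>x\<in>lower_at_2 z. off_diag (common_nbrs x z)) \<subseteq> off_diag (lower_nbrs z)"
  using off_diag_mono common_nbrs_subset_lower_nbrs unfolding lower_at_2_def by blast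

lemma finite_off_diag_lower_nbrs: "z \<in> Z \<Longrightarrow> finite (off_diag (lower_nbrs z))"
  using finite_off_diag finite_lower_nbrs unfolding layer_def by blast

lemma sum_card_off_diag_common_nbrs_le:
  assumes z: "z \<in> Z"
  shows "(\<Sum>x\<in>lower_at_2 z. card (off_diag (common_nbrs x z))) \<le> card (off_diag (lower_nbrs z))"
  unfolding card_off_diag_common_nbrs_eq_card_Union[OF z]
  by (rule card_mono[OF finite_off_diag_lower_nbrs[OF z] Union_off_diag_common_nbrs_subset[OF z]])

lemma sum_card_off_diag_common_nbrs_le_sum:
  "(\<Sum>x\<in>X. \<Sum>z\<in>sphere E 2 x. card (off_diag (common_nbrs x z))) \<le>
    (\<Sum>x\<in>X. \<Sum>z\<in>sphere E 2 x. card (common_nbrs x z))"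
proof -
  let ?low = "\<lambda>x. {z\<in>sphere E 2 x. level z \<le> j}" and ?high = "\<lambda>x. {z\<in>Z. z \<in> sphere E 2 x}"
  have fin_sphere: "finite (sphere E 2 x)" if "x \<in> X" for x
    using finite_sphere_2 reachable_in_V that unfolding layer_def by blast
  have split: "(\<Sum>z\<in>sphere E 2 x. f z) = (\<Sum>z\<in>?low x. f z) + (\<Sum>z\<in>?high x. f z)"
    if x: "x \<in> X" for x and f :: "'a \<Rightarrow> nat"
  proof -
    have "?low x \<union> ?high x = sphere E 2 x"
      using sphere_2_level_le[OF x] unfolding layer_def by fastforce
    moreover have "?low x \<inter> ?high x = {}" unfolding layer_def by auto
    moreover have "finite (?low x)" "finite (?high x)" using fin_sphere[OF x] by auto
    ultimately show ?thesis using sum.union_disjoint[of "?low x" "?high x" f] by simp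
  qed
  have swap: "(\<Sum>x\<in>X. \<Sum>z\<in>?high x. f x z) = (\<Sum>z\<in>Z. \<Sum>x\<in>lower_at_2 z. f x z)"
    for f :: "'a \<Rightarrow> 'a \<Rightarrow> nat"
    unfolding lower_at_2_def by (rule sum.swap_restrict[OF finite_X finite_Z])
  have low: "(\<Sum>z\<in>?low x. card (off_diag (common_nbrs x z))) \<le> (\<Sum>z\<in>?low x. card (common_nbrs x z))"
    if x: "x \<in> X" for x
  proof (rule sum_mono)
    fix z assume "z \<in> ?low x"
    then have "card (common_nbrs x z) \<le> 2" using card_common_nbrs_le_2[OF x] by blast
    then have "card (common_nbrs x z) * (card (common_nbrs x z) - 1) \<le> card (common_nbrs x z) * 1"
      by (intro mult_le_mono2) linarith
    then show "card (off_diag (common_nbrs x z)) \<le> card (common_nbrs x z)"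
      using card_off_diag[OF finite_common_nbrs_X[OF x]] by simp
  qed
  have high: "(\<Sum>x\<in>lower_at_2 z. card (off_diag (common_nbrs x z))) \<le>
      (\<Sum>x\<in>lower_at_2 z. card (common_nbrs x z))" if z: "z \<in> Z" for z
    using sum_card_off_diag_common_nbrs_le[OF z] sum_card_common_nbrs_lower_at_2[OF z]
      card_off_diag[OF finite_lower_nbrs] lower_nbrs_Z(2)[OF z] z unfolding layer_def by auto
  have decompose: "(\<Sum>x\<in>X. \<Sum>z\<in>sphere E 2 x. f x z) =
      (\<Sum>x\<in>X. \<Sum>z\<in>?low x. f x z) + (\<Sum>z\<in>Z. \<Sum>x\<in>lower_at_2 z. f x z)"
    for f :: "'a \<Rightarrow> 'a \<Rightarrow> nat"
    using split[of _ "f _"] swap[of f] by (simp add: sum.distrib)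
  show ?thesis
    unfolding decompose by (intro add_mono sum_mono low high) auto
qed

lemma sum_2_le_sum_card_common_nbrs:
  assumes x: "x \<in> X"
  shows "(\<Sum>z\<in>sphere E 2 x. 2) \<le> (\<Sum>z\<in>sphere E 2 x. card (common_nbrs x z))"
proof -
  have lx: "reachable x" "level x + 2 \<le> k" using x j_pos j_less unfolding layer_def by auto
  have "even (D * (D - 1))" by (cases "even D") simp_all
  then have "2 * (D choose 2) = D * (D - 1)" by (simp add: choose_two)
  moreover have "card (sphere E 2 x) \<le> D choose 2" using SSP_NCP_at[OF lx] unfolding SSP_def by blast
  ultimately show ?thesis using sum_card_common_nbrs_sphere_2[OF reachable_in_V[OF lx(1)]] by simp
qed

lemma card_common_nbrs_eq_2:
  assumes x: "x \<in> X" and z: "z \<in> sphere E 2 x"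
  shows "card (common_nbrs x z) = 2"
proof -
  define R where "R = (SIGMA x:X. sphere E 2 x)"
  define c where "c = (\<lambda>(x, z). card (common_nbrs x z))"
  have fin_sphere: "\<forall>x\<in>X. finite (sphere E 2 x)"
    using finite_sphere_2 reachable_in_V unfolding layer_def by blast
  have Sigma: "(\<Sum>p\<in>R. f p) = (\<Sum>x\<in>X. \<Sum>z\<in>sphere E 2 x. f (x, z))" for f :: "'a \<times> 'a \<Rightarrow> nat"
    unfolding R_def by (subst sum.Sigma[OF finite_X fin_sphere]) (simp add: split_def)
  have "c (x, z) = 2"
  proof (rule sum_bounds_imp_eq_2[of R])
    show "finite R" unfolding R_def using finite_X fin_sphere by blast
    show "1 \<le> c p" if "p \<in> R" for p
    proof -
      obtain x' z' where p: "p = (x', z')" "x' \<in> X" "z' \<in> sphere E 2 x'"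
        using \<open>p \<in> R\<close> unfolding R_def by blast
      then have "common_nbrs x' z' \<noteq> {}" using sphere_2_eq unfolding common_nbrs_def by blast
      then show ?thesis using finite_common_nbrs_X[OF p(2)] p(1) unfolding c_def
        by (simp add: Suc_le_eq card_gt_0_iff)
    qed
    show "(\<Sum>p\<in>R. 2) \<le> (\<Sum>p\<in>R. c p)"
      unfolding Sigma c_def using sum_2_le_sum_card_common_nbrs by (simp add: sum_mono)
    have "(\<Sum>p\<in>R. c p * (c p - 1)) = (\<Sum>x\<in>X. \<Sum>z\<in>sphere E 2 x. card (off_diag (common_nbrs x z)))"
      unfolding Sigma c_def using card_off_diag[OF finite_common_nbrs_X] by simp
    then show "(\<Sum>p\<in>R. c p * (c p - 1)) \<le> (\<Sum>p\<in>R. c p)"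
      unfolding Sigma c_def using sum_card_off_diag_common_nbrs_le_sum by simp
    show "(x, z) \<in> R" unfolding R_def using x z by simp
  qed
  then show ?thesis unfolding c_def by simp
qed

lemma lower_nbrs_pair_in_common_nbrs:
  assumes z: "z \<in> Z" and ab: "a \<in> lower_nbrs z" "b \<in> lower_nbrs z" "a \<noteq> b"
  obtains x where "x \<in> X" "a \<in> common_nbrs x z" "b \<in> common_nbrs x z"
proof -
  have "card (off_diag (common_nbrs x z)) = card (common_nbrs x z)" if "x \<in> lower_at_2 z" for x
  proof -
    have x: "x \<in> X" "z \<in> sphere E 2 x" using that unfolding lower_at_2_def by auto
    show ?thesis using card_off_diag[OF finite_common_nbrs_X[OF x(1)]] card_common_nbrs_eq_2[OF x] by simp
  qed
  then have "card (\<Union>x\<in>lower_at_2 z. off_diag (common_nbrs x z)) =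
      (\<Sum>x\<in>lower_at_2 z. card (common_nbrs x z))"
    unfolding card_off_diag_common_nbrs_eq_card_Union[OF z, symmetric] by (rule sum.cong[OF refl])
  also have "\<dots> = card (off_diag (lower_nbrs z))"
    using sum_card_common_nbrs_lower_at_2[OF z] card_off_diag[OF finite_lower_nbrs] lower_nbrs_Z(2)[OF z] z
    unfolding layer_def by simp
  finally have "(\<Union>x\<in>lower_at_2 z. off_diag (common_nbrs x z)) = off_diag (lower_nbrs z)"
    by (rule card_subset_eq[OF finite_off_diag_lower_nbrs[OF z] Union_off_diag_common_nbrs_subset[OF z]])
  moreover have "(a, b) \<in> off_diag (lower_nbrs z)" using ab unfolding off_diag_def by simp
  ultimately show ?thesis using that unfolding off_diag_def lower_at_2_def by blast
qed

text \<open>The images of two lower neighbours of \<open>z\<close> overlap in the image of a common lower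
  neighbour \<open>x\<close>, and only the two vertices in \<open>common_nbrs x z\<close> have images containing it.\<close>
lemma lower_nbrs_images_overlap:
  assumes z: "z \<in> Z" and ab: "a \<in> lower_nbrs z" "b \<in> lower_nbrs z" "a \<noteq> b"
  shows "\<exists>S. S \<subseteq> \<Phi> a \<inter> \<Phi> b \<and> card S = j - 1 \<and> card {C\<in>\<Phi> ` lower_nbrs z. S \<subseteq> C} \<le> 2"
proof -
  obtain x where x: "x \<in> X" "a \<in> common_nbrs x z" "b \<in> common_nbrs x z"
    by (rule lower_nbrs_pair_in_common_nbrs[OF z ab])
  have x_ball: "x \<in> level_ball j" and lx: "level x = j - 1"
    using x X_ball unfolding layer_def by auto
  have below: "E x w \<longleftrightarrow> \<Phi> x \<subseteq> \<Phi> w" if "w \<in> lower_nbrs z" for w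
  proof -
    have "w \<in> level_ball j" "level w = Suc (level x)"
      using that lower_nbrs_Z(1)[OF z] W_ball lx j_pos unfolding layer_def by auto
    then show ?thesis by (rule ball_iso_adj_iff_subset[OF iso x_ball])
  qed
  have "z \<in> sphere E 2 x" using sphere_2_of_path[OF x(1) z] x(2) unfolding common_nbrs_def by blast
  have "card {C\<in>\<Phi> ` lower_nbrs z. \<Phi> x \<subseteq> C} \<le> card (\<Phi> ` common_nbrs x z)"
  proof (rule card_mono)
    show "finite (\<Phi> ` common_nbrs x z)" using finite_common_nbrs_X[OF x(1)] by blast
    show "{C\<in>\<Phi> ` lower_nbrs z. \<Phi> x \<subseteq> C} \<subseteq> \<Phi> ` common_nbrs x z"
      using below E_commute unfolding common_nbrs_def lower_nbrs_def by blast
  qed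
  also have "\<dots> \<le> card (common_nbrs x z)" using card_image_le finite_common_nbrs_X[OF x(1)] by blast
  also have "\<dots> = 2" using card_common_nbrs_eq_2[OF x(1) \<open>z \<in> sphere E 2 x\<close>] .
  finally have "card {C\<in>\<Phi> ` lower_nbrs z. \<Phi> x \<subseteq> C} \<le> 2" .
  moreover have "\<Phi> x \<subseteq> \<Phi> a \<inter> \<Phi> b" using below ab x unfolding common_nbrs_def by blast
  moreover have "card (\<Phi> x) = j - 1" using ball_iso_subset_card[OF iso x_ball] lx by simp
  ultimately show ?thesis by blast
qed

definition Psi :: "'a \<Rightarrow> nat set" where
  "Psi z = \<Union>(\<Phi> ` lower_nbrs z)"

lemma Phi_lower_nbrs_eq_subsets_Psi:
  assumes z: "z \<in> Z"
  shows "card (Psi z) = Suc j \<and> \<Phi> ` lower_nbrs z = {A. A \<subseteq> Psi z \<and> card A = j}"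
  unfolding Psi_def
proof (rule family_eq_subsets_of_Union[OF _ _ j_pos])
  have lower_ball: "lower_nbrs z \<subseteq> level_ball j" using lower_nbrs_Z(1)[OF z] W_ball by blast
  have inj: "inj_on \<Phi> (lower_nbrs z)" using inj_on_subset[OF ball_iso_inj[OF iso] lower_ball] .
  show "finite (\<Phi> ` lower_nbrs z)" using finite_lower_nbrs z unfolding layer_def by blast
  show "card (\<Phi> ` lower_nbrs z) = Suc j" using card_image[OF inj] lower_nbrs_Z(2)[OF z] by simp
  show "finite A \<and> card A = j" if A: "A \<in> \<Phi> ` lower_nbrs z" for A
  proof -
    obtain w where w: "w \<in> lower_nbrs z" "A = \<Phi> w" using A by blast
    then have "w \<in> level_ball j" "level w = j"
      using lower_ball lower_nbrs_Z(1)[OF z] unfolding layer_def by auto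
    then show ?thesis using ball_iso_subset_card[OF iso] w(2) finite_subset by fastforce
  qed
  show "\<exists>S. S \<subseteq> A \<inter> B \<and> card S = j - 1 \<and> card {C\<in>\<Phi> ` lower_nbrs z. S \<subseteq> C} \<le> 2"
    if "A \<in> \<Phi> ` lower_nbrs z" "B \<in> \<Phi> ` lower_nbrs z" "A \<noteq> B" for A B
    using that lower_nbrs_images_overlap[OF z] by blast
qed

lemma Psi_subset: "z \<in> Z \<Longrightarrow> Psi z \<subseteq> {1..D}"
  unfolding Psi_def using lower_nbrs_Z(1) W_ball ball_iso_subset_card[OF iso] by (meson UN_least subsetD)

lemma adj_iff_subset_Psi:
  assumes z: "z \<in> Z" and w: "w \<in> W"
  shows "E w z \<longleftrightarrow> \<Phi> w \<subseteq> Psi z"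
proof
  assume "E w z"
  then have "w \<in> lower_nbrs z" using E_sym w z unfolding lower_nbrs_def layer_def by auto
  then show "\<Phi> w \<subseteq> Psi z" unfolding Psi_def by blast
next
  assume "\<Phi> w \<subseteq> Psi z"
  moreover have "card (\<Phi> w) = j" using ball_iso_subset_card[OF iso] w W_ball unfolding layer_def by auto
  ultimately have "\<Phi> w \<in> \<Phi> ` lower_nbrs z"
    using Phi_lower_nbrs_eq_subsets_Psi[OF z] by simp
  then obtain w' where w': "w' \<in> lower_nbrs z" "\<Phi> w = \<Phi> w'" by blast
  then have "w = w'"
    using ball_iso_inj[OF iso] w W_ball lower_nbrs_Z(1)[OF z] unfolding inj_on_def by blast
  then show "E w z" using w' E_sym unfolding lower_nbrs_def by blast
qed

text \<open>Here NCP at \<open>x\<close> enters, applicable because all common-neighbour counts at \<open>x\<close> are two.\<close>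
lemma unique_upper_common_nbr:
  assumes x: "x \<in> X" and z: "z \<in> Z" and z': "z' \<in> Z"
    and "E x a" "E x b" "a \<noteq> b" "E a z" "E b z" "E a z'" "E b z'"
  shows "z = z'"
proof -
  have lx: "reachable x" "level x + 2 \<le> k" using x j_pos j_less unfolding layer_def by auto
  have "\<forall>z\<in>sphere E 2 x. dminus E x z = 2"
    using card_common_nbrs_eq_2[OF x] dminus_sphere_2 by simp
  then have "card {z\<in>sphere E 2 x. E a z \<and> E z b} \<le> Suc 0"
    using SSP_NCP_at[OF lx] assms(4-6) sphere_1_eq unfolding NCP_def by simp
  moreover have "finite {z\<in>sphere E 2 x. E a z \<and> E z b}"
    using finite_sphere_2 reachable_in_V[OF lx(1)] by simp
  ultimately have "\<forall>u\<in>{z\<in>sphere E 2 x. E a z \<and> E z b}. \<forall>v\<in>{z\<in>sphere E 2 x. E a z \<and> E z b}. u = v"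
    using card_le_Suc0_iff_eq by blast
  moreover have "z \<in> {z\<in>sphere E 2 x. E a z \<and> E z b}" "z' \<in> {z\<in>sphere E 2 x. E a z \<and> E z b}"
    using sphere_2_of_path[OF x] z z' assms(4-10) E_commute by auto
  ultimately show ?thesis by blast
qed

text \<open>If \<open>\<Psi> z = \<Psi> z' = U\<close>, pick \<open>a \<noteq> b\<close> in \<open>U\<close>: the vertices \<open>w\<^sub>a, w\<^sub>b\<close> with images \<open>U - {a}\<close>,
  \<open>U - {b}\<close> are both adjacent to \<open>z\<close> and \<open>z'\<close> and have the common lower neighbour with image
  \<open>U - {a, b}\<close>.\<close>
lemma inj_on_Psi: "inj_on Psi Z"
proof (rule inj_onI)
  fix z z' assume z: "z \<in> Z" and z': "z' \<in> Z" and eq: "Psi z = Psi z'"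
  define U where "U = Psi z"
  have U: "card U = Suc j" "U \<subseteq> {1..D}" "finite U"
    using Phi_lower_nbrs_eq_subsets_Psi[OF z] Psi_subset[OF z] finite_subset U_def by auto
  have "\<not> card U \<le> Suc 0" using U(1) j_pos by simp
  then obtain a b where ab: "a \<in> U" "b \<in> U" "a \<noteq> b"
    using card_le_Suc0_iff_eq[OF U(3)] by blast
  have "U - {a, b} \<subseteq> {1..D}" using U(2) by blast
  moreover have "card (U - {a, b}) = j - 1" using U(1,3) ab by (simp add: card_Diff_subset)
  ultimately obtain x where x: "x \<in> X" "\<Phi> x = U - {a, b}"
    by (rule layer_vertex_of_subset[OF diff_le_self])
  have "card (U - {a}) = j" "card (U - {b}) = j" using U(1,3) ab by simp_all
  moreover have "U - {a} \<subseteq> {1..D}" "U - {b} \<subseteq> {1..D}" using U(2) by blast+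
  ultimately obtain wa wb where wa: "wa \<in> W" "\<Phi> wa = U - {a}" and wb: "wb \<in> W" "\<Phi> wb = U - {b}"
    by (metis layer_vertex_of_subset order.refl)
  have x_ball: "x \<in> level_ball j" and lx: "level x = j - 1" using x X_ball unfolding layer_def by auto
  have "level wa = Suc (level x)" "level wb = Suc (level x)"
    using wa wb lx j_pos unfolding layer_def by auto
  then have "E x wa" "E x wb"
    using ball_iso_adj_iff_subset[OF iso x_ball] wa wb W_ball x(2) by auto
  moreover have "wa \<noteq> wb" using wa(2) wb(2) ab by auto
  moreover have "E wa z" "E wb z" "E wa z'" "E wb z'"
    using adj_iff_subset_Psi[OF z] adj_iff_subset_Psi[OF z'] wa wb eq unfolding U_def by auto
  ultimately show "z = z'" using unique_upper_common_nbr[OF x(1) z z'] by blast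
qed

lemma bij_betw_Psi: "bij_betw Psi Z (cube_layer D (Suc j))"
proof -
  have "Psi z \<in> cube_layer D (Suc j)" if "z \<in> Z" for z
    using Phi_lower_nbrs_eq_subsets_Psi[OF that] Psi_subset[OF that] unfolding cube_layer_def by simp
  then have "Psi ` Z \<subseteq> cube_layer D (Suc j)" by blast
  moreover have "card (Psi ` Z) = card (cube_layer D (Suc j))"
    using card_image[OF inj_on_Psi] card_Z card_cube_layer by simp
  ultimately have "Psi ` Z = cube_layer D (Suc j)"
    by (rule card_subset_eq[OF finite_cube_layer])
  then show ?thesis using inj_on_Psi unfolding bij_betw_def by blast
qed

lemma ball_iso_Suc_exists: "\<exists>\<Phi>'. ball_iso (Suc j) \<Phi>'"
  using ball_iso_Suc[OF iso bij_betw_Psi adj_iff_subset_Psi] by blast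

end

context rooted_graph_SSP_NCP
begin

lemma ball_iso_exists: "j \<le> k \<Longrightarrow> \<exists>\<Phi>. ball_iso j \<Phi>"
proof (induction j)
  case 0
  show ?case using ball_iso_0 by blast
next
  case (Suc j)
  show ?case
  proof (cases "j = 0")
    case True
    then show ?thesis using ball_iso_1 by simp
  next
    case False
    then obtain \<Phi> where \<Phi>: "ball_iso j \<Phi>" using Suc by auto
    interpret ball_iso_step V E D x0 k j \<Phi>
      by unfold_locales (use Suc.prems False \<Phi> in auto)
    show ?thesis by (rule ball_iso_Suc_exists)
  qed
qed

end

theorem theorem6:
  fixes V :: "'a set" and E :: "'a \<Rightarrow> 'a \<Rightarrow> bool" and D k :: nat and x0 :: 'a
  assumes "simple_graph V E" and "regular V E D" and "bipartite V E"
    and "x0 \<in> V"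
    and "\<forall>y\<in>ball E (int k) x0. enat (dminus E x0 y) = gdist E x0 y"
    and "\<forall>x\<in>ball E (int k - 2) x0. SSP E D x \<and> NCP E x"
  shows "\<exists>\<Phi>. bij_betw \<Phi> (ball E (int k) x0) {A. A \<subseteq> {1..D} \<and> card A \<le> k} \<and>
           (\<forall>x\<in>ball E (int k) x0. \<forall>y\<in>ball E (int k) x0. E x y \<longleftrightarrow> hcube_adj D (\<Phi> x) (\<Phi> y))"
proof -
  interpret rooted_graph_SSP_NCP V E D x0 k
    by unfold_locales (fact assms)+
  obtain \<Phi> where "ball_iso k \<Phi>" using ball_iso_exists by blast
  then show ?thesis unfolding ball_eq_level_ball ball_iso_def cube_ball_def by blast
qed

end
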